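(* Let $K\supseteq\mathbb{F}_q$ be a field with Frobenius $\phi_q\colon a\mapsto a^q$, let $(M,\Phi)$ be an $n$-dimensional Frobenius module over $(K,\phi_q)$ with representing matrix $D\in\operatorname{GL}_n(K)$ with respect to some basis, and let $f\in K[X]$ be a polynomial of degree $q^n$. Suppose that every solution $x=(x_1,\ldots,x_n)\in\overline K^{\,n}$ of $D\cdot(x_1^q,\dots,x_n^q)^{\mathrm{tr}}=x$ is uniquely determined by its first coordinate $x_1$, that all other coordinates of $x$ lie in the field $K(x_1)$, and that $f(x_1)=0$. Then $\mathrm{Gal}^\Phi(M)\cong\mathrm{Gal}_K(f)$.
   Context: A Frobenius module over $(K,\phi_q)$ is a finite-dimensional $K$-vector space $M$ with an injective $\phi_q$-semilinear map $\Phi$; its representing matrix $D$ in a basis satisfies $\Phi(x)=D\cdot(x_1^q,\dots,x_n^q)^{\mathrm{tr}}$ in coordinates. The solution field is the minimal extension $L/K$ (inside the algebraic closure $\overline K$) such that $\{x\in L\otimes M:\Phi(x)=x\}$ has $\mathbb{F}_q$-dimension $\dim_K M$; it is Galois over $K$ and $\mathrm{Gal}^\Phi(M):=\mathrm{Gal}(L/K)$. *)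

theory Defs
  imports "HOL-Algebra.Algebraic_Closure_Type" "Jordan_Normal_Form.Matrix"
begin

text \<open>Ambient algebraic closure: for a field K of type 'k, the algebraic closure
  is the type 'k alg_closure, and K is embedded via to_ac.\<close>

definition is_subfield :: "'a::field set \<Rightarrow> bool" where
  "is_subfield L \<longleftrightarrow> 0 \<in> L \<and> 1 \<in> L \<and>
     (\<forall>a\<in>L. \<forall>b\<in>L. a + b \<in> L \<and> a * b \<in> L) \<and>
     (\<forall>a\<in>L. - a \<in> L \<and> inverse a \<in> L)"

definition gen_field :: "'a::field set \<Rightarrow> 'a set" where
  "gen_field S = \<Inter>{L. is_subfield L \<and> S \<subseteq> L}"

definition base_field :: "'k::field alg_closure set" where
  "base_field = range to_ac"

definition adjoin :: "'k::field alg_closure \<Rightarrow> 'k alg_closure set" where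
  "adjoin x = gen_field (base_field \<union> {x})"

definition ext_field :: "'k::field alg_closure set \<Rightarrow> bool" where
  "ext_field L \<longleftrightarrow> is_subfield L \<and> base_field \<subseteq> L"

definition Fq :: "nat \<Rightarrow> 'a::field set" where
  "Fq q = {a. a ^ q = a}"

definition frob_apply :: "nat \<Rightarrow> 'k::field mat \<Rightarrow> 'k alg_closure vec \<Rightarrow> 'k alg_closure vec" where
  "frob_apply q D x = map_mat to_ac D *\<^sub>v map_vec (\<lambda>a. a ^ q) x"

text \<open>Phi-fixed points of L \<otimes> M, in coordinates: vectors in L^n with Phi(x) = x.\<close>
definition frob_fixed :: "nat \<Rightarrow> 'k::field mat \<Rightarrow> 'k alg_closure set \<Rightarrow> 'k alg_closure vec set" where
  "frob_fixed q D L = {x. dim_vec x = dim_row D \<and> (\<forall>i < dim_vec x. x $ i \<in> L) \<and> frob_apply q D x = x}"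

definition has_Fq_dim :: "nat \<Rightarrow> 'a::field vec set \<Rightarrow> nat \<Rightarrow> bool" where
  "has_Fq_dim q S m \<longleftrightarrow>
     (\<exists>bs. length bs = m \<and> set bs \<subseteq> S \<and>
        (\<forall>x\<in>S. \<exists>!cs. length cs = m \<and> set cs \<subseteq> Fq q \<and>
             x = vec (dim_vec x) (\<lambda>j. \<Sum>i<m. cs ! i * (bs ! i) $ j)) \<and>
        (\<forall>cs. length cs = m \<and> set cs \<subseteq> Fq q \<longrightarrow>
             (\<exists>x\<in>S. x = vec (dim_vec x) (\<lambda>j. \<Sum>i<m. cs ! i * (bs ! i) $ j))))"

definition solution_field_good :: "nat \<Rightarrow> 'k::field mat \<Rightarrow> 'k alg_closure set \<Rightarrow> bool" where
  "solution_field_good q D L \<longleftrightarrow> ext_field L \<and> has_Fq_dim q (frob_fixed q D L) (dim_row D)"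

definition solution_field :: "nat \<Rightarrow> 'k::field mat \<Rightarrow> 'k alg_closure set" where
  "solution_field q D = (THE L. solution_field_good q D L \<and>
      (\<forall>L'. solution_field_good q D L' \<longrightarrow> L \<subseteq> L'))"

text \<open>Gal(L/K): automorphisms of L fixing K pointwise (extended by the identity
  outside L), as a group under composition.\<close>
definition gal_auts :: "'k::field alg_closure set \<Rightarrow> ('k alg_closure \<Rightarrow> 'k alg_closure) set" where
  "gal_auts L = {\<sigma>. bij_betw \<sigma> L L \<and>
      (\<forall>a\<in>L. \<forall>b\<in>L. \<sigma> (a + b) = \<sigma> a + \<sigma> b \<and> \<sigma> (a * b) = \<sigma> a * \<sigma> b) \<and>
      (\<forall>a\<in>base_field. \<sigma> a = a) \<and> (\<forall>x. x \<notin> L \<longrightarrow> \<sigma> x = x)}"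

definition gal_group :: "'k::field alg_closure set \<Rightarrow> ('k alg_closure \<Rightarrow> 'k alg_closure) monoid" where
  "gal_group L = \<lparr>carrier = gal_auts L, monoid.mult = (\<lambda>\<sigma> \<tau>. \<sigma> \<circ> \<tau>), one = id\<rparr>"

definition frob_gal_group :: "nat \<Rightarrow> 'k::field mat \<Rightarrow> ('k alg_closure \<Rightarrow> 'k alg_closure) monoid" where
  "frob_gal_group q D = gal_group (solution_field q D)"

definition splitting_field :: "'k::field poly \<Rightarrow> 'k alg_closure set" where
  "splitting_field f = gen_field (base_field \<union> {x. poly (map_poly to_ac f) x = 0})"

definition poly_gal_group :: "'k::field poly \<Rightarrow> ('k alg_closure \<Rightarrow> 'k alg_closure) monoid" where
  "poly_gal_group f = gal_group (splitting_field f)"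

end

theory Submission
  imports Defs
begin

text \<open>
  The core is Lang's theorem for the Frobenius-semilinear map Phi(x) = D x^(q) on Kbar^n:
  there are n fixed vectors that are linearly independent over Kbar, and the fixed vectors
  are exactly their F_q-linear combinations, so there are q^n of them. An independent
  family U of fixed vectors is extended by taking a vector e outside its span and the first
  linear relation between U and the orbit e, Phi e, Phi^2 e, ...; a suitable combination v
  of the orbit satisfies Phi v = v + (combination of U), and Artin-Schreier equations,
  solvable in Kbar, correct v into a new fixed vector.

  The first coordinate therefore maps the q^n fixed vectors injectively into the at most
  q^n roots of f, hence onto them. The solution field is generated by the coordinates of
  the fixed vectors, and these lie in the fields generated by the roots of f; so the
  solution field is the splitting field of f, and the two Galois groups are equal.
\<close>

no_notation fps_nth (infixl \<open>$\<close> 75)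

section \<open>Linear dependence of too many vectors\<close>

lemma linear_dependence_pivot:
  fixes F :: "nat \<Rightarrow> nat \<Rightarrow> 'a::field"
  assumes "finite I" "k0 \<in> I" "F k0 n \<noteq> 0"
    and "\<exists>i\<in>I - {k0}. d i \<noteq> 0"
    and "\<And>k. k < n \<Longrightarrow> (\<Sum>i\<in>I - {k0}. d i * (F i k - F i n / F k0 n * F k0 k)) = 0"
  shows "\<exists>c. (\<exists>i\<in>I. c i \<noteq> 0) \<and> (\<forall>k<Suc n. (\<Sum>i\<in>I. c i * F i k) = 0)"
proof -
  define J where "J = I - {k0}"
  define S where "S = (\<Sum>i\<in>J. d i * F i n / F k0 n)"
  define c where "c i = (if i = k0 then - S else d i)" for i
  have sum_I: "(\<Sum>i\<in>I. c i * F i k) = (\<Sum>i\<in>J. d i * F i k) - S * F k0 k" for k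
  proof -
    have "(\<Sum>i\<in>I. c i * F i k) = c k0 * F k0 k + (\<Sum>i\<in>J. c i * F i k)"
      using assms(1,2) by (simp add: J_def sum.remove)
    also have "(\<Sum>i\<in>J. c i * F i k) = (\<Sum>i\<in>J. d i * F i k)"
      by (rule sum.cong) (auto simp: c_def J_def)
    finally show ?thesis by (simp add: c_def)
  qed
  show ?thesis
  proof (intro exI[of _ c] conjI allI impI)
    show "\<exists>i\<in>I. c i \<noteq> 0" using assms(4) by (auto simp: c_def)
  next
    fix k assume "k < Suc n"
    then consider "k < n" | "k = n" by linarith
    then show "(\<Sum>i\<in>I. c i * F i k) = 0"
    proof cases
      case 1
      have "(\<Sum>i\<in>J. d i * F i k) - S * F k0 k = (\<Sum>i\<in>J. d i * (F i k - F i n / F k0 n * F k0 k))"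
        by (simp add: S_def right_diff_distrib sum_subtractf sum_distrib_left sum_distrib_right mult_ac)
      then show ?thesis using assms(5)[OF 1] sum_I by (simp add: J_def)
    next
      case 2
      have "S * F k0 n = (\<Sum>i\<in>J. d i * F i n)"
        using assms(3) by (simp add: S_def sum_distrib_right)
      then show ?thesis using sum_I 2 by simp
    qed
  qed
qed

lemma linear_dependence_of_card_gt:
  fixes F :: "nat \<Rightarrow> nat \<Rightarrow> 'a::field"
  assumes "finite I" "card I > n"
  shows "\<exists>c. (\<exists>i\<in>I. c i \<noteq> 0) \<and> (\<forall>k<n. (\<Sum>i\<in>I. c i * F i k) = 0)"
  using assms
proof (induction n arbitrary: I F)
  case 0
  then obtain i where "i \<in> I" by fastforce
  then show ?case by (intro exI[of _ "\<lambda>_. 1"]) auto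
next
  case (Suc n)
  show ?case
  proof (cases "\<forall>i\<in>I. F i n = 0")
    case True
    from Suc.IH[of I F] Suc.prems obtain c where
      c: "\<exists>i\<in>I. c i \<noteq> 0" "\<forall>k<n. (\<Sum>i\<in>I. c i * F i k) = 0"
      by auto
    have "(\<Sum>i\<in>I. c i * F i n) = 0" using True by simp
    with c show ?thesis by (intro exI[of _ c]) (auto simp: less_Suc_eq)
  next
    case False
    then obtain k0 where k0: "k0 \<in> I" "F k0 n \<noteq> 0" by auto
    have "finite (I - {k0})" "card (I - {k0}) > n"
      using Suc.prems k0 by auto
    from Suc.IH[OF this, of "\<lambda>i k. F i k - F i n / F k0 n * F k0 k"]
    obtain d where "\<exists>i\<in>I - {k0}. d i \<noteq> 0"
      "\<forall>k<n. (\<Sum>i\<in>I - {k0}. d i * (F i k - F i n / F k0 n * F k0 k)) = 0"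
      by blast
    then show ?thesis using linear_dependence_pivot[of I k0 F n d] Suc.prems(1) k0 by blast
  qed
qed

section \<open>Polynomials and roots in an algebraically closed field\<close>

text \<open>If V(i+1) = Phi (V i) and V(m+1) = (sum over i \<le> m of gamma i * V i) + (combination of U),
  then v = (sum over i \<le> m of a i * V i) satisfies Phi v = v + t^q * (combination of U) as soon as
  a 0 = gamma 0 * t^q, a (i+1) = (a i)^q + gamma (i+1) * t^q and a m = t.
  The polynomial orbit_poly q gamma i is a i as a function of t.\<close>

fun orbit_poly :: "nat \<Rightarrow> (nat \<Rightarrow> 'a::comm_ring_1) \<Rightarrow> nat \<Rightarrow> 'a poly" where
  "orbit_poly q \<gamma> 0 = smult (\<gamma> 0) (monom 1 q)"
| "orbit_poly q \<gamma> (Suc i) = orbit_poly q \<gamma> i ^ q + smult (\<gamma> (Suc i)) (monom 1 q)"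

lemma square_X_dvd_orbit_poly:
  assumes "q \<ge> 2"
  shows "[:0, 1:] ^ 2 dvd orbit_poly q \<gamma> i"
proof (induction i)
  have X: "[:0, 1:] ^ 2 dvd (monom 1 q :: 'a poly)"
    using assms by (simp add: monom_altdef le_imp_power_dvd)
  {
    case 0
    show ?case using X by (simp add: dvd_smult)
  next
    case (Suc i)
    have "orbit_poly q \<gamma> i dvd orbit_poly q \<gamma> i ^ q" using assms by (simp add: dvd_power)
    then have "[:0, 1:] ^ 2 dvd orbit_poly q \<gamma> i ^ q" using Suc.IH dvd_trans by blast
    then show ?case using X by (simp add: dvd_smult)
  }
qed

lemma degree_orbit_poly:
  fixes \<gamma> :: "nat \<Rightarrow> 'a::field"
  assumes "q \<ge> 2" "\<gamma> 0 \<noteq> 0"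
  shows "degree (orbit_poly q \<gamma> i) = q ^ Suc i"
proof (induction i)
  case 0
  show ?case using assms by (simp add: degree_monom_eq)
next
  case (Suc i)
  have "orbit_poly q \<gamma> i \<noteq> 0" using Suc.IH assms(1) by (intro notI) simp
  then have deg_pow: "degree (orbit_poly q \<gamma> i ^ q) = q ^ Suc (Suc i)"
    using Suc.IH by (simp add: degree_power_eq)
  have "degree (smult (\<gamma> (Suc i)) (monom 1 q)) \<le> q ^ 1"
    by (simp add: degree_monom_eq degree_smult_le)
  also have "\<dots> < q ^ Suc (Suc i)" using assms(1) by (intro power_strict_increasing) auto
  finally show ?case by (simp add: degree_add_eq_left deg_pow)
qed

lemma orbit_poly_nonzero_fixed_point:
  fixes \<gamma> :: "nat \<Rightarrow> 'a::alg_closed_field"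
  assumes "q \<ge> 2" "\<gamma> 0 \<noteq> 0"
  obtains t where "t \<noteq> 0" "poly (orbit_poly q \<gamma> i) t = t"
proof -
  obtain B where B: "orbit_poly q \<gamma> i = [:0, 1:] ^ 2 * B"
    using square_X_dvd_orbit_poly[OF assms(1)] by (metis dvdE)
  have "orbit_poly q \<gamma> i \<noteq> 0" using degree_orbit_poly[of q \<gamma> i, OF assms] assms(1) by (intro notI) simp
  then have "B \<noteq> 0" using B by auto
  then have "degree ([:0, 1:] * B + [:-1:]) = Suc (degree B)"
    by (simp add: degree_mult_eq degree_add_eq_left)
  then obtain t where "poly ([:0, 1:] * B + [:-1:]) t = 0"
    using alg_closed_imp_poly_has_root by (metis zero_less_Suc)
  then have "t * poly B t = 1" by simp
  then show thesis
    by (intro that[of t]) (auto simp: B power2_eq_square mult_ac)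
qed

lemma degree_monom_add:
  "degree p < q \<Longrightarrow> degree (monom (1 :: 'a::comm_ring_1) q + p) = q"
  by (simp add: degree_add_eq_left degree_monom_eq)

lemma exists_root_of_power:
  fixes a :: "'a::alg_closed_field"
  assumes "q > 0"
  shows "\<exists>z. z ^ q = a"
proof -
  have "degree (monom 1 q + [:-a:]) = q"
    using assms by (simp add: degree_monom_add)
  then obtain z where "poly (monom 1 q + [:-a:]) z = 0"
    using alg_closed_imp_poly_has_root assms by (metis not_gr_zero)
  then show ?thesis by (intro exI[of _ z]) (simp add: poly_monom)
qed

lemma exists_artin_schreier_root:
  fixes a :: "'a::alg_closed_field"
  assumes "q \<ge> 2"
  shows "\<exists>z. z - z ^ q = a"
proof -
  have "degree (monom 1 q + [:a, -1:]) = q"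
    using assms by (simp add: degree_monom_add)
  then obtain z where "poly (monom 1 q + [:a, -1:]) z = 0"
    using alg_closed_imp_poly_has_root assms by (metis not_numeral_le_zero not_gr_zero)
  then show ?thesis by (intro exI[of _ z]) (simp add: poly_monom algebra_simps)
qed

lemma prime_power_ge_2:
  fixes p :: nat
  assumes "prime p" "r > 0"
  shows "p ^ r \<ge> 2"
proof -
  have "1 < p ^ r" using prime_gt_1_nat[OF assms(1)] assms(2) by (rule one_less_power)
  then show ?thesis by simp
qed

lemma finite_Fq:
  assumes "q \<ge> 2"
  shows "finite (Fq q :: 'a::field set)"
proof -
  have "degree (monom 1 q + [:0, -1:] :: 'a poly) = q"
    using assms by (simp add: degree_monom_add)
  then have "monom 1 q + [:0, -1:] \<noteq> (0 :: 'a poly)" using assms by auto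
  moreover have "Fq q \<subseteq> {x :: 'a. poly (monom 1 q + [:0, -1:]) x = 0}"
    by (auto simp: Fq_def poly_monom)
  ultimately show ?thesis using poly_roots_finite finite_subset by blast
qed

section \<open>Frobenius-semilinear maps over an algebraically closed field\<close>

text \<open>E' is only required to be a left inverse of E: this is what makes Phi injective.\<close>

locale frobenius_map =
  fixes n q r :: nat and E E' :: "nat \<Rightarrow> nat \<Rightarrow> 'a::alg_closed_field"
  assumes prime_char: "prime CHAR('a)" and q_def: "q = CHAR('a) ^ r" and r_pos: "r > 0"
    and left_inverse: "\<And>i k. i < n \<Longrightarrow> k < n \<Longrightarrow> (\<Sum>j<n. E' i j * E j k) = (if i = k then 1 else 0)"
begin

definition Phi :: "'a vec \<Rightarrow> 'a vec" where
  "Phi x = vec n (\<lambda>i. \<Sum>j<n. E i j * x $ j ^ q)"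

definition fixed_vecs :: "'a vec set" where
  "fixed_vecs = {x \<in> carrier_vec n. Phi x = x}"

definition lin_comb :: "nat set \<Rightarrow> (nat \<Rightarrow> 'a) \<Rightarrow> (nat \<Rightarrow> 'a vec) \<Rightarrow> 'a vec" where
  "lin_comb I c U = vec n (\<lambda>k. \<Sum>i\<in>I. c i * U i $ k)"

definition lin_indep_concat :: "nat \<Rightarrow> (nat \<Rightarrow> 'a vec) \<Rightarrow> nat \<Rightarrow> (nat \<Rightarrow> 'a vec) \<Rightarrow> bool" where
  "lin_indep_concat j U m V \<longleftrightarrow> (\<forall>b c. (\<forall>k<n. (\<Sum>l<j. b l * U l $ k) + (\<Sum>i<m. c i * V i $ k) = 0)
      \<longrightarrow> (\<forall>l<j. b l = 0) \<and> (\<forall>i<m. c i = 0))"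

abbreviation lin_indep :: "nat \<Rightarrow> (nat \<Rightarrow> 'a vec) \<Rightarrow> bool" where
  "lin_indep j U \<equiv> lin_indep_concat j U 0 U"

lemma q_ge_2: "q \<ge> 2"
  using prime_char r_pos by (simp add: q_def prime_power_ge_2)

lemma power_q_add: "(x + y :: 'a) ^ q = x ^ q + y ^ q"
  using freshmans_dream'[OF prime_char q_def] .

lemma power_q_sum: "(sum f A :: 'a) ^ q = (\<Sum>i\<in>A. f i ^ q)"
  using freshmans_dream_sum'[OF prime_char q_def] .

lemma power_q_inj: "(x :: 'a) ^ q = y ^ q \<Longrightarrow> x = y"
  using power_q_add[of "x - y" y] q_ge_2 by simp

lemma dim_Phi [simp]: "dim_vec (Phi x) = n"
  and Phi_carrier [simp]: "Phi x \<in> carrier_vec n"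
  and index_Phi [simp]: "i < n \<Longrightarrow> Phi x $ i = (\<Sum>j<n. E i j * x $ j ^ q)"
  by (simp_all add: Phi_def)

lemma dim_lin_comb [simp]: "dim_vec (lin_comb I c U) = n"
  and lin_comb_carrier [simp]: "lin_comb I c U \<in> carrier_vec n"
  and index_lin_comb [simp]: "k < n \<Longrightarrow> lin_comb I c U $ k = (\<Sum>i\<in>I. c i * U i $ k)"
  by (simp_all add: lin_comb_def)

lemma fixed_vecs_carrier: "x \<in> fixed_vecs \<Longrightarrow> x \<in> carrier_vec n"
  by (simp add: fixed_vecs_def)

lemma Phi_lin_comb: "Phi (lin_comb I c U) = lin_comb I (\<lambda>i. c i ^ q) (\<lambda>i. Phi (U i))"
proof (rule eq_vecI)
  fix k assume "k < dim_vec (lin_comb I (\<lambda>i. c i ^ q) (\<lambda>i. Phi (U i)))"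
  then have k: "k < n" by simp
  have "Phi (lin_comb I c U) $ k = (\<Sum>j<n. E k j * (\<Sum>i\<in>I. c i ^ q * U i $ j ^ q))"
    using k by (simp add: power_q_sum power_mult_distrib)
  also have "\<dots> = (\<Sum>j<n. \<Sum>i\<in>I. c i ^ q * (E k j * U i $ j ^ q))"
    by (simp add: sum_distrib_left mult_ac)
  also have "\<dots> = (\<Sum>i\<in>I. \<Sum>j<n. c i ^ q * (E k j * U i $ j ^ q))"
    by (rule sum.swap)
  also have "\<dots> = (\<Sum>i\<in>I. c i ^ q * (\<Sum>j<n. E k j * U i $ j ^ q))"
    by (simp add: sum_distrib_left)
  also have "\<dots> = lin_comb I (\<lambda>i. c i ^ q) (\<lambda>i. Phi (U i)) $ k"
    using k by simp
  finally show "Phi (lin_comb I c U) $ k = lin_comb I (\<lambda>i. c i ^ q) (\<lambda>i. Phi (U i)) $ k" .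
qed simp

lemma Phi_lin_comb_fixed:
  assumes "\<forall>l<j. U l \<in> fixed_vecs"
  shows "Phi (lin_comb {..<j} c U) = lin_comb {..<j} (\<lambda>l. c l ^ q) U"
  by (rule eq_vecI) (use assms in \<open>auto simp: Phi_lin_comb fixed_vecs_def intro!: sum.cong\<close>)

lemma Phi_add:
  assumes "x \<in> carrier_vec n" "y \<in> carrier_vec n"
  shows "Phi (x + y) = Phi x + Phi y"
proof (rule eq_vecI)
  fix i assume "i < dim_vec (Phi x + Phi y)"
  then have "i < n" by simp
  then show "Phi (x + y) $ i = (Phi x + Phi y) $ i"
    using assms by (simp add: power_q_add distrib_left sum.distrib)
qed simp

lemma Phi_inj:
  assumes "x \<in> carrier_vec n" "y \<in> carrier_vec n" "Phi x = Phi y"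
  shows "x = y"
proof (rule eq_vecI)
  have power_q_coord: "z $ i ^ q = (\<Sum>j<n. E' i j * Phi z $ j)" if "i < n" for z i
  proof -
    have "(\<Sum>j<n. E' i j * Phi z $ j) = (\<Sum>j<n. \<Sum>k<n. E' i j * E j k * z $ k ^ q)"
      by (simp add: sum_distrib_left mult_ac)
    also have "\<dots> = (\<Sum>k<n. \<Sum>j<n. E' i j * E j k * z $ k ^ q)"
      by (rule sum.swap)
    also have "\<dots> = (\<Sum>k<n. (\<Sum>j<n. E' i j * E j k) * z $ k ^ q)"
      by (simp add: sum_distrib_right)
    also have "\<dots> = (\<Sum>k<n. if i = k then z $ k ^ q else 0)"
      by (rule sum.cong) (auto simp: left_inverse that)
    finally show ?thesis using that by simp
  qed
  fix i assume "i < dim_vec y"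
  then have "i < n" using assms by simp
  then show "x $ i = y $ i" using power_q_coord assms(3) by (metis power_q_inj)
qed (use assms in simp)

lemma lin_indep_concatD:
  assumes "lin_indep_concat j U m V" "\<forall>k<n. (\<Sum>l<j. b l * U l $ k) + (\<Sum>i<m. c i * V i $ k) = 0"
  shows "(\<forall>l<j. b l = 0) \<and> (\<forall>i<m. c i = 0)"
  using assms unfolding lin_indep_concat_def by blast

lemma lin_indep_concat_cong:
  assumes "\<And>i. i < m \<Longrightarrow> V i = V' i"
  shows "lin_indep_concat j U m V = lin_indep_concat j U m V'"
proof -
  have "(\<Sum>i<m. c i * V i $ k) = (\<Sum>i<m. c i * V' i $ k)" for c k
    by (rule sum.cong) (auto simp: assms)
  then show ?thesis unfolding lin_indep_concat_def by simp
qed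

lemma lin_indep_concat_bound:
  assumes "lin_indep_concat j U m V"
  shows "j + m \<le> n"
proof (rule ccontr)
  assume "\<not> j + m \<le> n"
  define F where "F t k = (if t < j then U t $ k else V (t - j) $ k)" for t k
  obtain c where c: "\<exists>t\<in>{..<j + m}. c t \<noteq> 0" "\<forall>k<n. (\<Sum>t<j + m. c t * F t k) = 0"
    using linear_dependence_of_card_gt[of "{..<j + m}" n F] \<open>\<not> j + m \<le> n\<close> by auto
  have split: "(\<Sum>t<j + m. g t) = (\<Sum>t<j. g t) + (\<Sum>i<m. g (j + i))" for g :: "nat \<Rightarrow> 'a"
    by (induction m) (auto simp: add_ac)
  have "\<forall>k<n. (\<Sum>l<j. c l * U l $ k) + (\<Sum>i<m. c (j + i) * V i $ k) = 0"
    using c(2) by (simp add: split F_def)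
  from lin_indep_concatD[OF assms this] c(1) show False
    by (metis add_diff_inverse_nat lessThan_iff nat_add_left_cancel_less)
qed

text \<open>Since j < n, some nonzero functional y kills U 0, ..., U (j - 1); a unit vector on which
  y does not vanish lies outside their span.\<close>

lemma exists_vec_extending_lin_indep:
  assumes "j < n" "lin_indep j U"
  obtains e where "e \<in> carrier_vec n" "lin_indep_concat j U 1 (\<lambda>_. e)"
proof -
  obtain y where y: "\<exists>k\<in>{..<n}. y k \<noteq> 0" "\<forall>l<j. (\<Sum>k<n. y k * U l $ k) = 0"
    using linear_dependence_of_card_gt[of "{..<n}" j "\<lambda>k l. U l $ k"] assms(1) by auto
  then obtain k0 where k0: "k0 < n" "y k0 \<noteq> 0" by auto
  have "lin_indep_concat j U 1 (\<lambda>_. unit_vec n k0)"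
    unfolding lin_indep_concat_def
  proof (intro allI impI)
    fix b c :: "nat \<Rightarrow> 'a"
    assume rel: "\<forall>k<n. (\<Sum>l<j. b l * U l $ k) + (\<Sum>i<1. c i * unit_vec n k0 $ k) = 0"
    have "0 = (\<Sum>k<n. y k * ((\<Sum>l<j. b l * U l $ k) + c 0 * unit_vec n k0 $ k))"
      using rel by simp
    also have "\<dots> = (\<Sum>l<j. b l * (\<Sum>k<n. y k * U l $ k)) + c 0 * (\<Sum>k<n. y k * unit_vec n k0 $ k)"
      by (simp add: distrib_left sum.distrib sum_distrib_left mult_ac sum.swap[of _ "{..<j}"])
    also have "(\<Sum>k<n. y k * unit_vec n k0 $ k) = y k0"
      using k0 by (simp add: unit_vec_def if_distrib[of "\<lambda>z. y _ * z"] cong: if_cong)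
    finally have "c 0 = 0" using y(2) k0 by simp
    then have "\<forall>k<n. (\<Sum>l<j. b l * U l $ k) + (\<Sum>i<0. c i * U i $ k) = 0" using rel by simp
    then show "(\<forall>l<j. b l = 0) \<and> (\<forall>i<1. c i = 0)"
      using lin_indep_concatD[OF assms(2)] \<open>c 0 = 0\<close> by simp
  qed
  then show thesis using that[of "unit_vec n k0"] by simp
qed

lemma lin_comb_eq_imp_coeffs_eq:
  assumes "lin_indep j U" "lin_comb {..<j} \<beta> U = lin_comb {..<j} \<beta>' U"
  shows "\<forall>l<j. \<beta> l = \<beta>' l"
proof -
  have "(\<Sum>l<j. \<beta> l * U l $ k) = (\<Sum>l<j. \<beta>' l * U l $ k)" if "k < n" for k
    using arg_cong[OF assms(2), of "\<lambda>x. x $ k"] that by simp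
  then have "\<forall>k<n. (\<Sum>l<j. (\<beta> l - \<beta>' l) * U l $ k) + (\<Sum>i<0. \<beta> i * U i $ k) = 0"
    by (simp add: left_diff_distrib sum_subtractf)
  from lin_indep_concatD[OF assms(1) this] show ?thesis by simp
qed

lemma lin_comb_of_lin_dep:
  assumes indep: "lin_indep_concat j U m V" and dep: "\<not> lin_indep_concat j U (Suc m) V"
    and "V m \<in> carrier_vec n"
  obtains \<gamma> \<beta> where "V m = lin_comb {..<m} \<gamma> V + lin_comb {..<j} \<beta> U"
proof -
  from dep obtain b c :: "nat \<Rightarrow> 'a" where
    rel: "\<forall>k<n. (\<Sum>l<j. b l * U l $ k) + (\<Sum>i<Suc m. c i * V i $ k) = 0" and
    nz: "\<not> ((\<forall>l<j. b l = 0) \<and> (\<forall>i<Suc m. c i = 0))"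
    unfolding lin_indep_concat_def by blast
  have c_last: "c m \<noteq> 0"
  proof
    assume "c m = 0"
    then have "\<forall>k<n. (\<Sum>l<j. b l * U l $ k) + (\<Sum>i<m. c i * V i $ k) = 0" using rel by simp
    from lin_indep_concatD[OF indep this] \<open>c m = 0\<close> nz show False using less_Suc_eq by auto
  qed
  define \<gamma> where "\<gamma> i = - c i / c m" for i
  define \<beta> where "\<beta> l = - b l / c m" for l
  have "V m = lin_comb {..<m} \<gamma> V + lin_comb {..<j} \<beta> U"
  proof (rule eq_vecI)
    fix k assume "k < dim_vec (lin_comb {..<m} \<gamma> V + lin_comb {..<j} \<beta> U)"
    then have k: "k < n" by simp
    have \<gamma>_sum: "c m * (\<Sum>i<m. \<gamma> i * V i $ k) = - (\<Sum>i<m. c i * V i $ k)"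
      by (simp add: \<gamma>_def sum_distrib_left c_last sum_negf)
    have \<beta>_sum: "c m * (\<Sum>l<j. \<beta> l * U l $ k) = - (\<Sum>l<j. b l * U l $ k)"
      by (simp add: \<beta>_def sum_distrib_left c_last sum_negf)
    have "c m * V m $ k = - (\<Sum>l<j. b l * U l $ k) - (\<Sum>i<m. c i * V i $ k)"
      using rel k by (simp add: algebra_simps eq_neg_iff_add_eq_0)
    also have "\<dots> = c m * ((\<Sum>i<m. \<gamma> i * V i $ k) + (\<Sum>l<j. \<beta> l * U l $ k))"
      by (simp add: distrib_left \<gamma>_sum \<beta>_sum)
    finally show "V m $ k = (lin_comb {..<m} \<gamma> V + lin_comb {..<j} \<beta> U) $ k"
      using c_last k by simp
  qed (use assms(3) in simp)
  then show thesis by (rule that)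
qed

lemma lin_comb_of_lin_indep:
  assumes indep: "lin_indep n U" and x: "x \<in> carrier_vec n"
  obtains \<beta> where "x = lin_comb {..<n} \<beta> U"
proof -
  have "lin_indep_concat n U 0 (\<lambda>_. x)"
    using indep lin_indep_concat_cong[of 0 U "\<lambda>_. x" n U] by simp
  moreover have "\<not> lin_indep_concat n U (Suc 0) (\<lambda>_. x)"
    using lin_indep_concat_bound by fastforce
  ultimately obtain \<gamma> \<beta> where "x = lin_comb {..<0} \<gamma> (\<lambda>_. x) + lin_comb {..<n} \<beta> U"
    using lin_comb_of_lin_dep x by blast
  then have "x = lin_comb {..<n} \<beta> U"
    by (auto simp: lin_comb_def intro!: eq_vecI)
  then show thesis by (rule that)
qed

lemma fixed_vector_from_almost_fixed:
  assumes U: "\<forall>l<j. U l \<in> fixed_vecs" and indep: "lin_indep_concat j U (Suc m) V"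
    and "a m \<noteq> 0"
    and almost_fixed: "Phi (lin_comb {..<Suc m} a V) = lin_comb {..<Suc m} a V + lin_comb {..<j} \<delta> U"
  obtains w where "w \<in> fixed_vecs" "lin_indep_concat j U 1 (\<lambda>_. w)"
proof -
  obtain g where g: "\<forall>l. \<delta> l = g l - g l ^ q"
    using choice[of "\<lambda>l z. \<delta> l = z - z ^ q"] exists_artin_schreier_root[OF q_ge_2] by metis
  define v where "v = lin_comb {..<Suc m} a V"
  define w where "w = v + lin_comb {..<j} g U"
  have "Phi w = v + lin_comb {..<j} \<delta> U + lin_comb {..<j} (\<lambda>l. g l ^ q) U"
    by (simp add: w_def v_def Phi_add almost_fixed Phi_lin_comb_fixed[OF U])
  also have "\<dots> = w"
    by (rule eq_vecI) (simp_all add: w_def v_def g left_diff_distrib sum_subtractf)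
  finally have "w \<in> fixed_vecs" by (simp add: fixed_vecs_def w_def v_def)
  moreover have "lin_indep_concat j U 1 (\<lambda>_. w)"
    unfolding lin_indep_concat_def
  proof (intro allI impI)
    fix b c :: "nat \<Rightarrow> 'a"
    assume "\<forall>k<n. (\<Sum>l<j. b l * U l $ k) + (\<Sum>i<1. c i * w $ k) = 0"
    then have "\<forall>k<n. (\<Sum>l<j. (b l + c 0 * g l) * U l $ k) + (\<Sum>i<Suc m. (c 0 * a i) * V i $ k) = 0"
      by (simp add: w_def v_def algebra_simps sum.distrib sum_distrib_left)
    from lin_indep_concatD[OF indep this] have "\<forall>l<j. b l + c 0 * g l = 0" "c 0 * a m = 0"
      by auto
    with \<open>a m \<noteq> 0\<close> show "(\<forall>l<j. b l = 0) \<and> (\<forall>i<1. c i = 0)" by simp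
  qed
  ultimately show thesis by (rule that)
qed

end

locale frobenius_orbit = frobenius_map +
  fixes V :: "nat \<Rightarrow> 'a vec"
  assumes orbit_0_carrier: "V 0 \<in> carrier_vec n" and orbit_Suc: "V (Suc i) = Phi (V i)"
begin

lemma orbit_carrier: "V i \<in> carrier_vec n"
  by (cases i) (simp_all add: orbit_0_carrier orbit_Suc)

lemma orbit_relation:
  assumes "lin_indep_concat j U 1 V"
  obtains m \<gamma> \<beta> where "lin_indep_concat j U (Suc m) V"
    and "V (Suc m) = lin_comb {..<Suc m} \<gamma> V + lin_comb {..<j} \<beta> U"
proof -
  let ?dep = "\<lambda>m. \<not> lin_indep_concat j U (Suc (Suc m)) V"
  have "?dep n" using lin_indep_concat_bound by fastforce
  define m where "m = (LEAST m. ?dep m)"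
  have dep: "?dep m" unfolding m_def using \<open>?dep n\<close> by (rule LeastI)
  have indep: "lin_indep_concat j U (Suc m) V"
  proof (cases m)
    case 0
    then show ?thesis using assms by simp
  next
    case (Suc m')
    then have "m' < m" by simp
    then have "\<not> ?dep m'" unfolding m_def by (rule not_less_Least)
    then show ?thesis using Suc by simp
  qed
  obtain \<gamma> \<beta> where "V (Suc m) = lin_comb {..<Suc m} \<gamma> V + lin_comb {..<j} \<beta> U"
    using lin_comb_of_lin_dep[OF indep dep orbit_carrier] by blast
  with indep show thesis by (rule that)
qed

text \<open>If gamma 0 = 0, then V (m+1) is Phi of a combination of U and V 0, ..., V (m-1); injectivity
  of Phi pulls this back to a relation expressing V m, contradicting the independence of
  V 0, ..., V m over U.\<close>

lemma orbit_relation_const_nonzero: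
  assumes U: "\<forall>l<j. U l \<in> fixed_vecs" and indep: "lin_indep_concat j U (Suc m) V"
    and rel: "V (Suc m) = lin_comb {..<Suc m} \<gamma> V + lin_comb {..<j} \<beta> U"
  shows "\<gamma> 0 \<noteq> 0"
proof
  assume "\<gamma> 0 = 0"
  have root: "\<exists>z. z ^ q = a" for a :: 'a
    using exists_root_of_power[of q] q_ge_2 by simp
  obtain \<rho> where \<rho>: "\<forall>i. \<rho> i ^ q = \<gamma> (Suc i)"
    using choice[of "\<lambda>i z. z ^ q = \<gamma> (Suc i)"] root by blast
  obtain \<sigma> where \<sigma>: "\<forall>l. \<sigma> l ^ q = \<beta> l"
    using choice[of "\<lambda>l z. z ^ q = \<beta> l"] root by blast
  define x where "x = lin_comb {..<m} \<rho> V + lin_comb {..<j} \<sigma> U"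
  have "Phi x = Phi (lin_comb {..<m} \<rho> V) + Phi (lin_comb {..<j} \<sigma> U)"
    by (simp add: x_def Phi_add)
  also have "Phi (lin_comb {..<m} \<rho> V) = lin_comb {..<m} (\<lambda>i. \<gamma> (Suc i)) (\<lambda>i. V (Suc i))"
    by (simp add: Phi_lin_comb \<rho> orbit_Suc)
  also have "\<dots> = lin_comb {..<Suc m} \<gamma> V"
    by (rule eq_vecI) (simp_all add: sum.lessThan_Suc_shift \<open>\<gamma> 0 = 0\<close> del: sum.lessThan_Suc)
  also have "Phi (lin_comb {..<j} \<sigma> U) = lin_comb {..<j} \<beta> U"
    by (simp add: Phi_lin_comb_fixed[OF U] \<sigma>)
  finally have "Phi x = Phi (V m)" using rel by (simp add: orbit_Suc)
  then have x: "x = V m" by (rule Phi_inj[rotated 2]) (simp_all add: x_def orbit_carrier)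
  have "\<forall>k<n. (\<Sum>l<j. (- \<sigma> l) * U l $ k) + (\<Sum>i<Suc m. (if i < m then - \<rho> i else 1) * V i $ k) = 0"
  proof (intro allI impI)
    fix k assume "k < n"
    then have "V m $ k = (\<Sum>i<m. \<rho> i * V i $ k) + (\<Sum>l<j. \<sigma> l * U l $ k)"
      by (simp add: x[symmetric] x_def)
    then show "(\<Sum>l<j. (- \<sigma> l) * U l $ k) + (\<Sum>i<Suc m. (if i < m then - \<rho> i else 1) * V i $ k) = 0"
      by (simp add: sum_negf)
  qed
  from lin_indep_concatD[OF indep this] show False by auto
qed

lemma orbit_almost_fixed_vector:
  assumes rel: "V (Suc m) = lin_comb {..<Suc m} \<gamma> V + lin_comb {..<j} \<beta> U" and "\<gamma> 0 \<noteq> 0"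
  obtains a where "a m \<noteq> 0"
    and "Phi (lin_comb {..<Suc m} a V) = lin_comb {..<Suc m} a V + lin_comb {..<j} (\<lambda>l. a m ^ q * \<beta> l) U"
proof -
  obtain t where t: "t \<noteq> 0" "poly (orbit_poly q \<gamma> m) t = t"
    using orbit_poly_nonzero_fixed_point[of q \<gamma> m, OF q_ge_2 \<open>\<gamma> 0 \<noteq> 0\<close>] by blast
  define a where "a i = poly (orbit_poly q \<gamma> i) t" for i
  have a_0: "a 0 = \<gamma> 0 * t ^ q" and a_Suc: "a (Suc i) = a i ^ q + \<gamma> (Suc i) * t ^ q"
    and a_m: "a m = t" for i
    by (simp_all add: a_def poly_monom t)
  have "Phi (lin_comb {..<Suc m} a V) = lin_comb {..<Suc m} a V + lin_comb {..<j} (\<lambda>l. t ^ q * \<beta> l) U"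
  proof (rule eq_vecI)
    fix k assume "k < dim_vec (lin_comb {..<Suc m} a V + lin_comb {..<j} (\<lambda>l. t ^ q * \<beta> l) U)"
    then have k: "k < n" by simp
    have "Phi (lin_comb {..<Suc m} a V) $ k = (\<Sum>i<m. a i ^ q * V (Suc i) $ k) + t ^ q * V (Suc m) $ k"
      using k by (simp add: Phi_lin_comb a_m flip: orbit_Suc)
    moreover have "V (Suc m) $ k = \<gamma> 0 * V 0 $ k + (\<Sum>i<m. \<gamma> (Suc i) * V (Suc i) $ k) + (\<Sum>l<j. \<beta> l * U l $ k)"
      using k by (subst rel) (simp add: sum.lessThan_Suc_shift del: sum.lessThan_Suc)
    moreover have "lin_comb {..<Suc m} a V $ k = a 0 * V 0 $ k + (\<Sum>i<m. a (Suc i) * V (Suc i) $ k)"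
      using k by (simp add: sum.lessThan_Suc_shift del: sum.lessThan_Suc)
    ultimately show "Phi (lin_comb {..<Suc m} a V) $ k
        = (lin_comb {..<Suc m} a V + lin_comb {..<j} (\<lambda>l. t ^ q * \<beta> l) U) $ k"
      using k by (simp add: a_0 a_Suc algebra_simps sum.distrib sum_distrib_left)
  qed simp
  then show thesis using that[of a] t(1) by (simp add: a_m)
qed

end

context frobenius_map
begin

lemma exists_fixed_vec_extending_lin_indep:
  assumes "j < n" and U: "\<forall>l<j. U l \<in> fixed_vecs" and "lin_indep j U"
  obtains w where "w \<in> fixed_vecs" "lin_indep_concat j U 1 (\<lambda>_. w)"
proof -
  obtain e where e: "e \<in> carrier_vec n" "lin_indep_concat j U 1 (\<lambda>_. e)"
    using exists_vec_extending_lin_indep[OF assms(1,3)] by blast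
  interpret orbit: frobenius_orbit n q r E E' "\<lambda>i. (Phi ^^ i) e"
    by (intro frobenius_orbit.intro frobenius_map_axioms frobenius_orbit_axioms.intro) (simp_all add: e)
  have "lin_indep_concat j U 1 (\<lambda>i. (Phi ^^ i) e)"
    using e(2) lin_indep_concat_cong[of 1 "\<lambda>i. (Phi ^^ i) e" "\<lambda>_. e" j U] by simp
  then obtain m \<gamma> \<beta> where indep: "lin_indep_concat j U (Suc m) (\<lambda>i. (Phi ^^ i) e)"
    and rel: "(Phi ^^ Suc m) e = lin_comb {..<Suc m} \<gamma> (\<lambda>i. (Phi ^^ i) e) + lin_comb {..<j} \<beta> U"
    by (rule orbit.orbit_relation)
  have "\<gamma> 0 \<noteq> 0" by (rule orbit.orbit_relation_const_nonzero[OF U indep rel])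
  then obtain a where "a m \<noteq> 0" "Phi (lin_comb {..<Suc m} a (\<lambda>i. (Phi ^^ i) e))
      = lin_comb {..<Suc m} a (\<lambda>i. (Phi ^^ i) e) + lin_comb {..<j} (\<lambda>l. a m ^ q * \<beta> l) U"
    by (rule orbit.orbit_almost_fixed_vector[OF rel])
  from fixed_vector_from_almost_fixed[OF U indep this] that show thesis by blast
qed

lemma exists_fixed_lin_indep:
  assumes "j \<le> n"
  shows "\<exists>U. (\<forall>l<j. U l \<in> fixed_vecs) \<and> lin_indep j U"
  using assms
proof (induction j)
  case 0
  show ?case by (auto simp: lin_indep_concat_def)
next
  case (Suc j)
  then obtain U where U: "\<forall>l<j. U l \<in> fixed_vecs" "lin_indep j U" by auto
  obtain w where w: "w \<in> fixed_vecs" "lin_indep_concat j U 1 (\<lambda>_. w)"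
    using exists_fixed_vec_extending_lin_indep[of j U] Suc.prems U by auto
  have indep: "lin_indep (Suc j) (U(j := w))"
    unfolding lin_indep_concat_def
  proof (intro allI impI)
    fix b c :: "nat \<Rightarrow> 'a"
    assume rel: "\<forall>k<n. (\<Sum>l<Suc j. b l * (U(j := w)) l $ k) + (\<Sum>i<0. c i * (U(j := w)) i $ k) = 0"
    have "(\<Sum>l<j. b l * (U(j := w)) l $ k) = (\<Sum>l<j. b l * U l $ k)" for k
      by (rule sum.cong) auto
    then have "\<forall>k<n. (\<Sum>l<j. b l * U l $ k) + (\<Sum>i<1::nat. b j * w $ k) = 0"
      using rel by simp
    from lin_indep_concatD[OF w(2) this] show "(\<forall>l<Suc j. b l = 0) \<and> (\<forall>i<0. c i = 0)"
      by (auto simp: less_Suc_eq)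
  qed
  moreover have "\<forall>l<Suc j. (U(j := w)) l \<in> fixed_vecs" using U w by (auto simp: less_Suc_eq)
  ultimately show ?case by blast
qed

lemma lin_comb_mem_fixed_vecs_iff:
  assumes U: "\<forall>l<n. U l \<in> fixed_vecs" "lin_indep n U"
  shows "lin_comb {..<n} c U \<in> fixed_vecs \<longleftrightarrow> (\<forall>l<n. c l \<in> Fq q)"
proof -
  have "lin_comb {..<n} c U \<in> fixed_vecs \<longleftrightarrow> lin_comb {..<n} (\<lambda>l. c l ^ q) U = lin_comb {..<n} c U"
    using Phi_lin_comb_fixed[OF U(1)] by (simp add: fixed_vecs_def)
  also have "\<dots> \<longleftrightarrow> (\<forall>l<n. c l ^ q = c l)"
  proof
    assume "lin_comb {..<n} (\<lambda>l. c l ^ q) U = lin_comb {..<n} c U"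
    then show "\<forall>l<n. c l ^ q = c l" by (rule lin_comb_eq_imp_coeffs_eq[OF U(2)])
  next
    assume "\<forall>l<n. c l ^ q = c l"
    then show "lin_comb {..<n} (\<lambda>l. c l ^ q) U = lin_comb {..<n} c U"
      by (auto simp: lin_comb_def intro!: eq_vecI sum.cong)
  qed
  finally show ?thesis by (simp add: Fq_def)
qed

theorem has_Fq_dim_fixed_vecs: "has_Fq_dim q fixed_vecs n"
proof -
  obtain U where U: "\<forall>l<n. U l \<in> fixed_vecs" "lin_indep n U"
    using exists_fixed_lin_indep by blast
  define comb where "comb cs = lin_comb {..<n} (\<lambda>i. cs ! i) U" for cs :: "'a list"
  have comb_eq: "vec (dim_vec x) (\<lambda>k. \<Sum>i<n. cs ! i * (map U [0..<n] ! i) $ k) = comb cs"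
    if "x \<in> fixed_vecs" for x cs
    using that by (auto simp: comb_def lin_comb_def fixed_vecs_def intro!: eq_vecI sum.cong)
  have set_Fq: "set cs \<subseteq> Fq q \<longleftrightarrow> (\<forall>l<n. cs ! l \<in> Fq q)" if "length cs = n" for cs
    using that by (auto simp: set_conv_nth)
  show ?thesis
    unfolding has_Fq_dim_def
  proof (intro exI[of _ "map U [0..<n]"] conjI ballI allI impI)
    show "length (map U [0..<n]) = n" "set (map U [0..<n]) \<subseteq> fixed_vecs"
      using U(1) by auto
  next
    fix x assume x: "x \<in> fixed_vecs"
    then obtain \<beta> where \<beta>: "x = lin_comb {..<n} \<beta> U"
      using lin_comb_of_lin_indep[OF U(2)] fixed_vecs_carrier by blast
    have x_comb: "x = comb (map \<beta> [0..<n])"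
      by (auto simp: \<beta> comb_def lin_comb_def intro!: eq_vecI sum.cong)
    show "\<exists>!cs. length cs = n \<and> set cs \<subseteq> Fq q \<and>
        x = vec (dim_vec x) (\<lambda>k. \<Sum>i<n. cs ! i * (map U [0..<n] ! i) $ k)"
    proof (rule ex1I[of _ "map \<beta> [0..<n]"])
      show "length (map \<beta> [0..<n]) = n \<and> set (map \<beta> [0..<n]) \<subseteq> Fq q \<and>
          x = vec (dim_vec x) (\<lambda>k. \<Sum>i<n. map \<beta> [0..<n] ! i * (map U [0..<n] ! i) $ k)"
        using x lin_comb_mem_fixed_vecs_iff[OF U, of \<beta>] \<beta> set_Fq[of "map \<beta> [0..<n]"]
          comb_eq[OF x, of "map \<beta> [0..<n]"] x_comb
        by simp
    next
      fix cs assume cs: "length cs = n \<and> set cs \<subseteq> Fq q \<and>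
          x = vec (dim_vec x) (\<lambda>k. \<Sum>i<n. cs ! i * (map U [0..<n] ! i) $ k)"
      then have "comb cs = comb (map \<beta> [0..<n])" using comb_eq[OF x] x_comb by simp
      then have "\<forall>l<n. cs ! l = map \<beta> [0..<n] ! l"
        unfolding comb_def by (rule lin_comb_eq_imp_coeffs_eq[OF U(2)])
      then show "cs = map \<beta> [0..<n]" using cs by (auto intro: nth_equalityI)
    qed
  next
    fix cs :: "'a list" assume "length cs = n \<and> set cs \<subseteq> Fq q"
    then have "comb cs \<in> fixed_vecs"
      using lin_comb_mem_fixed_vecs_iff[OF U] set_Fq[of cs] by (simp add: comb_def)
    then show "\<exists>x\<in>fixed_vecs. x = vec (dim_vec x) (\<lambda>k. \<Sum>i<n. cs ! i * (map U [0..<n] ! i) $ k)"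
      using comb_eq by metis
  qed
qed

end

section \<open>Frobenius modules, solution fields and splitting fields\<close>

lemma frobenius_map_of_invertible_mat:
  fixes D :: "'k::field mat"
  assumes "prime CHAR('k)" "r > 0" "q = CHAR('k) ^ r"
    and "D \<in> carrier_mat n n" "invertible_mat D"
  shows "\<exists>E'. frobenius_map n q r (\<lambda>i j. to_ac (D $$ (i, j))) E'"
proof -
  from assms(5) obtain B where B: "inverts_mat B D" and "inverts_mat D B"
    unfolding invertible_mat_def by blast
  then have "B * D = 1\<^sub>m (dim_row B)" "D * B = 1\<^sub>m n"
    using assms(4) by (auto simp: inverts_mat_def)
  then have B_carrier: "B \<in> carrier_mat n n"
    using arg_cong[of _ _ dim_col] assms(4) by (metis carrier_matD carrier_matI index_mult_mat(3) index_one_mat(3))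
  have "(\<Sum>j<n. to_ac (B $$ (i, j)) * to_ac (D $$ (j, k))) = (if i = k then 1 else 0)"
    if "i < n" "k < n" for i k :: nat
  proof -
    have "(B * D) $$ (i, k) = 1\<^sub>m n $$ (i, k)" using B B_carrier by (simp add: inverts_mat_def)
    then have "(\<Sum>j\<in>{0..<n}. B $$ (i, j) * D $$ (j, k)) = (if i = k then 1 else 0)"
      using that B_carrier assms(4) by (simp add: scalar_prod_def)
    then have "to_ac (\<Sum>j\<in>{0..<n}. B $$ (i, j) * D $$ (j, k)) = (if i = k then 1 else 0)"
      by simp
    then show ?thesis by (simp add: to_ac_sum atLeast0LessThan)
  qed
  then show ?thesis using assms(1-3)
    by (intro exI[of _ "\<lambda>i j. to_ac (B $$ (i, j))"] frobenius_map.intro) simp_all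
qed

lemma has_Fq_dim_frob_fixed:
  fixes D :: "'k::field mat"
  assumes "prime CHAR('k)" "r > 0" "q = CHAR('k) ^ r"
    and D: "D \<in> carrier_mat n n" and "invertible_mat D"
  shows "has_Fq_dim q (frob_fixed q D UNIV) n"
proof -
  obtain E' where "frobenius_map n q r (\<lambda>i j. to_ac (D $$ (i, j))) E'"
    using frobenius_map_of_invertible_mat[OF assms] by blast
  then interpret frobenius_map n q r "\<lambda>i j. to_ac (D $$ (i, j))" E' .
  have "frob_apply q D x = Phi x" if x: "dim_vec x = n" for x
  proof (rule eq_vecI)
    fix i assume "i < dim_vec (Phi x)"
    then have i: "i < n" by simp
    then have "frob_apply q D x $ i = (\<Sum>j\<in>{0..<n}. to_ac (D $$ (i, j)) * x $ j ^ q)"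
      using x D by (simp add: frob_apply_def scalar_prod_def)
    with i show "frob_apply q D x $ i = Phi x $ i" by (simp add: atLeast0LessThan)
  qed (use D in \<open>simp add: frob_apply_def\<close>)
  then have "frob_fixed q D UNIV = fixed_vecs"
    using D by (auto simp: frob_fixed_def fixed_vecs_def)
  with has_Fq_dim_fixed_vecs show ?thesis by simp
qed

lemma card_Fq_le_alg_closure:
  assumes "finite (Fq q :: 'k::field alg_closure set)"
  shows "card (Fq q :: 'k set) \<le> card (Fq q :: 'k alg_closure set)"
proof -
  have "to_ac ` Fq q \<subseteq> (Fq q :: 'k alg_closure set)"
    by (auto simp: Fq_def simp flip: to_ac_power)
  with assms have "card (to_ac ` (Fq q :: 'k set)) \<le> card (Fq q :: 'k alg_closure set)"
    by (rule card_mono)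
  moreover have "inj_on to_ac (Fq q :: 'k set)" using inj_to_ac by (rule inj_on_subset) simp
  ultimately show ?thesis by (simp add: card_image)
qed

lemma has_Fq_dim_finite_card:
  fixes S :: "'a::field vec set"
  assumes "has_Fq_dim q S m" and fin: "finite (Fq q :: 'a set)" and dims: "\<forall>x\<in>S. dim_vec x = d"
  shows "finite S" "card S = card (Fq q :: 'a set) ^ m"
proof -
  from assms(1) obtain bs where
    uniq: "\<forall>x\<in>S. \<exists>!cs. length cs = m \<and> set cs \<subseteq> Fq q \<and>
      x = vec (dim_vec x) (\<lambda>j. \<Sum>i<m. cs ! i * (bs ! i) $ j)" and
    ex: "\<forall>cs. length cs = m \<and> set cs \<subseteq> Fq q \<longrightarrow>
      (\<exists>x\<in>S. x = vec (dim_vec x) (\<lambda>j. \<Sum>i<m. cs ! i * (bs ! i) $ j))"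
    unfolding has_Fq_dim_def by blast
  define Lists where "Lists = {cs. set cs \<subseteq> (Fq q :: 'a set) \<and> length cs = m}"
  define h where "h cs = vec d (\<lambda>j. \<Sum>i<m. cs ! i * (bs ! i) $ j)" for cs
  have h_in: "h cs \<in> S" "h cs = vec (dim_vec (h cs)) (\<lambda>j. \<Sum>i<m. cs ! i * (bs ! i) $ j)"
    if "cs \<in> Lists" for cs
    using ex that dims by (auto simp: Lists_def h_def)
  have "bij_betw h Lists S"
  proof (rule bij_betw_imageI)
    show "inj_on h Lists"
    proof (rule inj_onI)
      fix cs cs' assume "cs \<in> Lists" "cs' \<in> Lists" "h cs = h cs'"
      then show "cs = cs'" using uniq h_in[of cs] h_in[of cs'] by (auto simp: Lists_def)
    qed
    show "h ` Lists = S"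
    proof
      show "h ` Lists \<subseteq> S" using h_in by blast
      show "S \<subseteq> h ` Lists"
      proof
        fix x assume "x \<in> S"
        with uniq dims obtain cs where "cs \<in> Lists" "x = h cs"
          by (auto simp: Lists_def h_def)
        then show "x \<in> h ` Lists" by blast
      qed
    qed
  qed
  moreover have "finite Lists" "card Lists = card (Fq q :: 'a set) ^ m"
    using fin by (simp_all add: Lists_def finite_lists_length_eq card_lists_length_eq)
  ultimately show "finite S" "card S = card (Fq q :: 'a set) ^ m"
    by (auto simp: bij_betw_finite bij_betw_same_card[symmetric])
qed

lemma is_subfield_gen_field: "is_subfield (gen_field S)"
  unfolding gen_field_def is_subfield_def by auto

lemma gen_field_superset: "S \<subseteq> gen_field S"
  unfolding gen_field_def by auto

lemma gen_field_least: "is_subfield L \<Longrightarrow> S \<subseteq> L \<Longrightarrow> gen_field S \<subseteq> L"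
  unfolding gen_field_def by auto

lemma gen_field_mono: "S \<subseteq> T \<Longrightarrow> gen_field S \<subseteq> gen_field T"
  unfolding gen_field_def by auto

definition vec_coords :: "nat \<Rightarrow> 'a vec set \<Rightarrow> 'a set" where
  "vec_coords n S = {x $ i | x i. x \<in> S \<and> i < n}"

text \<open>A field L over which the fixed vectors have full F_q-dimension contains as many of them as
  Kbar does, hence all of them; so the solution field is generated by their coordinates.\<close>

lemma solution_field_eq:
  fixes D :: "'k::field mat"
  assumes dim: "has_Fq_dim q (frob_fixed q D UNIV) (dim_row D)"
    and fin: "finite (Fq q :: 'k alg_closure set)"
  shows "solution_field q D = gen_field (base_field \<union> vec_coords (dim_row D) (frob_fixed q D UNIV))"
proof -
  define n S where "n = dim_row D" and "S = frob_fixed q D UNIV"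
  define L0 where "L0 = gen_field (base_field \<union> vec_coords n S)"
  have dims: "\<forall>x\<in>frob_fixed q D L. dim_vec x = n" for L
    by (simp add: frob_fixed_def n_def)
  have fixed_in: "frob_fixed q D L = {x \<in> S. \<forall>i<n. x $ i \<in> L}" for L
    by (auto simp: S_def frob_fixed_def n_def)
  have S: "finite S" "card S = card (Fq q :: 'k alg_closure set) ^ n"
    using has_Fq_dim_finite_card[OF _ fin dims] dim by (simp_all add: S_def n_def)
  have good: "solution_field_good q D L0"
  proof -
    have generators: "base_field \<union> vec_coords n S \<subseteq> L0"
      unfolding L0_def by (rule gen_field_superset)
    then have "frob_fixed q D L0 = S" by (auto simp: fixed_in vec_coords_def)
    with dim generators show ?thesis
      by (auto simp: solution_field_good_def ext_field_def L0_def S_def n_def is_subfield_gen_field)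
  qed
  have least: "L0 \<subseteq> L" if "solution_field_good q D L" for L
  proof -
    have L: "is_subfield L" "base_field \<subseteq> L" "has_Fq_dim q (frob_fixed q D L) n"
      using that by (simp_all add: solution_field_good_def ext_field_def n_def)
    have "card (frob_fixed q D L) = card S"
      using has_Fq_dim_finite_card[OF L(3) fin dims] S by simp
    then have "frob_fixed q D L = S"
      using S(1) by (intro card_subset_eq) (auto simp: fixed_in)
    then have "vec_coords n S \<subseteq> L" by (auto simp: fixed_in vec_coords_def)
    then show ?thesis using L unfolding L0_def by (intro gen_field_least) auto
  qed
  have "solution_field q D = L0"
    unfolding solution_field_def using good least by (intro the_equality) auto
  then show ?thesis by (simp add: L0_def S_def n_def)
qed

lemma splitting_field_eq:
  fixes f :: "'k::field poly"
  assumes roots: "{x. poly (map_poly to_ac f) x = 0} = (\<lambda>x. x $ 0) ` S"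
    and adjoin: "\<forall>x\<in>S. \<forall>i<n. x $ i \<in> adjoin (x $ 0)" and "n > 0"
  shows "splitting_field f = gen_field (base_field \<union> vec_coords n S)"
proof (rule antisym)
  have "{x. poly (map_poly to_ac f) x = 0} \<subseteq> vec_coords n S"
    using roots \<open>n > 0\<close> by (auto simp: vec_coords_def)
  then show "splitting_field f \<subseteq> gen_field (base_field \<union> vec_coords n S)"
    unfolding splitting_field_def by (intro gen_field_mono) blast
next
  have "adjoin (x $ 0) \<subseteq> splitting_field f" if "x \<in> S" for x
    using roots that unfolding adjoin_def splitting_field_def by (intro gen_field_mono) blast
  then have "vec_coords n S \<subseteq> splitting_field f"
    using adjoin by (auto simp: vec_coords_def)
  moreover have "base_field \<subseteq> splitting_field f"
    unfolding splitting_field_def using gen_field_superset by blast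
  ultimately show "gen_field (base_field \<union> vec_coords n S) \<subseteq> splitting_field f"
    unfolding splitting_field_def by (intro gen_field_least is_subfield_gen_field) auto
qed

theorem mainTheorem10:
  fixes D :: "'k::field mat" and f :: "'k poly" and q n r :: nat
  assumes "prime (CHAR('k))" and "r > 0" and "q = CHAR('k) ^ r"
    and "card (Fq q :: 'k set) = q"
    and "n > 0"
    and "D \<in> carrier_mat n n" and "invertible_mat D"
    and "degree f = q ^ n"
    and "\<forall>x\<in>frob_fixed q D UNIV. \<forall>y\<in>frob_fixed q D UNIV. x $ 0 = y $ 0 \<longrightarrow> x = y"
    and "\<forall>x\<in>frob_fixed q D UNIV. \<forall>i<n. x $ i \<in> adjoin (x $ 0)"
    and "\<forall>x\<in>frob_fixed q D UNIV. poly (map_poly to_ac f) (x $ 0) = 0"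
  shows "frob_gal_group q D \<cong> poly_gal_group f"
proof -
  define S where "S = frob_fixed q D UNIV"
  define R where "R = {x. poly (map_poly to_ac f) x = 0}"
  have dim_row: "dim_row D = n" using assms(6) by simp
  have dim: "has_Fq_dim q S n" unfolding S_def using has_Fq_dim_frob_fixed assms(1-3,6,7) .
  have q: "q \<ge> 2" using prime_power_ge_2[OF assms(1,2)] assms(3) by simp
  then have fin: "finite (Fq q :: 'k alg_closure set)" by (rule finite_Fq)
  have "\<forall>x\<in>S. dim_vec x = n" by (simp add: S_def frob_fixed_def dim_row)
  then have "card S = card (Fq q :: 'k alg_closure set) ^ n"
    by (rule has_Fq_dim_finite_card(2)[OF dim fin])
  then have card_S: "q ^ n \<le> card S"
    using card_Fq_le_alg_closure[OF fin] assms(4) by (simp add: power_mono)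
  have deg: "degree (map_poly to_ac f) = q ^ n" using assms(8) by (simp add: degree_map_poly)
  then have "map_poly to_ac f \<noteq> 0" using q by (intro notI) simp
  then have "finite R" "card R \<le> q ^ n"
    using poly_roots_finite card_poly_roots_bound deg by (fastforce simp: R_def)+
  moreover note card_S
  moreover have "inj_on (\<lambda>x. x $ 0) S" "(\<lambda>x. x $ 0) ` S \<subseteq> R"
    using assms(9,11) by (auto simp: S_def R_def intro: inj_onI)
  ultimately have "R = (\<lambda>x. x $ 0) ` S" by (metis card_image card_seteq le_trans)
  then have "solution_field q D = splitting_field f"
    using solution_field_eq[of q D] splitting_field_eq[of f S n] dim fin assms(5,10)
    by (simp add: S_def R_def dim_row)
  then show ?thesis by (simp add: frob_gal_group_def poly_gal_group_def)
qed

end
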